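(* For each order function $h$ there exists an order function $g$ such that every $\mathrm{DNR}_g$ function computes (is Turing-reducible to... i.e., Turing-computes) an $\mathrm{SNPR}_h$ function. That is, for every $f\in\mathrm{DNR}_g$ there is $j\le_T f$ with $j\in\mathrm{SNPR}_h$.
   Context: $\varphi_e$ denotes the $e$-th partial recursive function. A function $f:\omega\to\omega$ is DNR (diagonally non-recursive) if $f(e)\neq\varphi_e(e)$ for every $e$ such that $\varphi_e(e)$ is defined. A function $f:\omega\to\omega$ is strongly non-partial-recursive (SNPR) if for every partial recursive function $\psi$, for all but finitely many $n$, if $\psi(n)$ is defined then $f(n)\neq\psi(n)$. An order function is a recursive, nondecreasing, unbounded function $h:\omega\to\omega$ with $h(0)\ge 2$. For a class $\mathrm{C}$ of functions $\omega\to\omega$ and an order function $h$, $\mathrm{C}_h$ denotes the subclass of members of $\mathrm{C}$ bounded by $h$ (i.e., $f(n)<h(n)$ for all $n$). *)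

theory Defs
  imports Main "HOL-Library.Nat_Bijection"
begin

text \<open>Programs for (oracle) partial recursive functions, Kleene style.
  Arguments are lists of naturals.\<close>

datatype recf =
    Z
  | S                      (* successor of first argument *)
  | Id nat
  | Cn recf "recf list"
  | Pr recf recf           (* primitive recursion on first argument *)
  | Mn recf
  | Orc                    (* oracle query on first argument *)

inductive eval :: "(nat \<Rightarrow> nat) \<Rightarrow> recf \<Rightarrow> nat list \<Rightarrow> nat \<Rightarrow> bool"
  for A :: "nat \<Rightarrow> nat" where
  eval_Z: "eval A Z xs 0"
| eval_S: "eval A S (x # xs) (Suc x)"
| eval_Id: "n < length xs \<Longrightarrow> eval A (Id n) xs (xs ! n)"
| eval_Cn: "list_all2 (\<lambda>g y. eval A g xs y) gs ys \<Longrightarrow> eval A f ys z \<Longrightarrow> eval A (Cn f gs) xs z"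
| eval_Pr0: "eval A f xs y \<Longrightarrow> eval A (Pr f g) (0 # xs) y"
| eval_PrS: "eval A (Pr f g) (n # xs) r \<Longrightarrow> eval A g (n # r # xs) y \<Longrightarrow> eval A (Pr f g) (Suc n # xs) y"
| eval_Mn: "eval A f (y # xs) 0 \<Longrightarrow> (\<forall>z<y. \<exists>v. v \<noteq> 0 \<and> eval A f (z # xs) v) \<Longrightarrow> eval A (Mn f) xs y"
| eval_Orc: "eval A Orc (x # xs) (A x)"
monos list.rel_mono_strong

primrec enc :: "recf \<Rightarrow> nat" where
  "enc Z = prod_encode (0, 0)"
| "enc S = prod_encode (1, 0)"
| "enc (Id n) = prod_encode (2, n)"
| "enc (Cn f gs) = prod_encode (3, prod_encode (enc f, list_encode (map enc gs)))"
| "enc (Pr f g) = prod_encode (4, prod_encode (enc f, enc g))"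
| "enc (Mn f) = prod_encode (5, enc f)"
| "enc Orc = prod_encode (6, 0)"

text \<open>Indices that code no program give the nowhere-defined function. Oracle-free
  computation: the oracle is the constant 0 function (a recursive function).\<close>

definition phi :: "nat \<Rightarrow> nat \<Rightarrow> nat \<Rightarrow> bool" where
  "phi e x y \<longleftrightarrow> (\<exists>p. enc p = e \<and> eval (\<lambda>_. 0) p [x] y)"

definition recursive_fn :: "(nat \<Rightarrow> nat) \<Rightarrow> bool" where
  "recursive_fn h \<longleftrightarrow> (\<exists>e. \<forall>x. phi e x (h x))"

definition turing_le :: "(nat \<Rightarrow> nat) \<Rightarrow> (nat \<Rightarrow> nat) \<Rightarrow> bool" where
  "turing_le j f \<longleftrightarrow> (\<exists>p. \<forall>x. eval f p [x] (j x))"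

definition order_fn :: "(nat \<Rightarrow> nat) \<Rightarrow> bool" where
  "order_fn h \<longleftrightarrow> recursive_fn h \<and> mono h \<and> (\<forall>m. \<exists>n. m < h n) \<and> 2 \<le> h 0"

definition DNR :: "(nat \<Rightarrow> nat) \<Rightarrow> bool" where
  "DNR f \<longleftrightarrow> (\<forall>e y. phi e e y \<longrightarrow> f e \<noteq> y)"

definition SNPR :: "(nat \<Rightarrow> nat) \<Rightarrow> bool" where
  "SNPR f \<longleftrightarrow> (\<forall>e. finite {n. phi e n (f n)})"

definition bounded_by :: "(nat \<Rightarrow> nat) \<Rightarrow> (nat \<Rightarrow> nat) \<Rightarrow> bool" where
  "bounded_by f h \<longleftrightarrow> (\<forall>n. f n < h n)"

end

theory Submission
  imports Defs
begin

text \<open>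
  Let \<open>V(n)\<close> be the largest \<open>v \<le> n\<close> with \<open>(v + 2)^v \<le> h(n)\<close> and \<open>B(n) = V(n) + 2\<close>, so that a
  number with \<open>V(n)\<close> digits in base \<open>B(n)\<close> is below \<open>h(n)\<close>. Uniformly in \<open>e\<close> and \<open>n\<close> one
  computes an index \<open>a(e, n)\<close> of a program that ignores its input and outputs the \<open>e\<close>-th
  base-\<open>B(n)\<close> digit of \<open>\<phi>\<^sub>e(n)\<close>, if \<open>\<phi>\<^sub>e(n)\<close> is defined. For \<open>f \<in> DNR\<close> let \<open>j(n)\<close> be the number
  whose \<open>e\<close>-th digit is \<open>f(a(e, n))\<close> for \<open>e < V(n)\<close>. Then \<open>j(n) \<noteq> \<phi>\<^sub>e(n)\<close> whenever
  \<open>e < V(n)\<close>, which holds for almost all \<open>n\<close> since \<open>V\<close> is unbounded, so \<open>j\<close> is SNPR and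
  bounded by \<open>h\<close>. For this the values \<open>f(a(e, n))\<close> must be digits, i.e. below \<open>B(n)\<close>;
  the bound \<open>g\<close> is chosen so that \<open>g(m) \<le> B(n)\<close> whenever \<open>m\<close> is one of the indices
  \<open>a(e, n)\<close>, \<open>e \<le> n\<close>.
\<close>

section \<open>Arithmetic of counting and of digit expansions\<close>

lemma count_greatest_down_closed:
  fixes Q :: "nat \<Rightarrow> bool" and n :: nat
  assumes "Q 0" "\<And>v. Q (Suc v) \<Longrightarrow> Q v"
  defines "c \<equiv> \<Sum>v<n. if Q (Suc v) then 1 else 0"
  shows "Q c \<and> c \<le> n \<and> (\<forall>v\<le>n. Q v \<longrightarrow> v \<le> c)"
  unfolding c_def
proof (induction n)
  case 0
  then show ?case using assms by auto
next
  case (Suc n)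
  show ?case
  proof (cases "Q (Suc n)")
    case True
    then have "(\<Sum>v<n. if Q (Suc v) then 1 else 0) = n"
      using Suc assms(2) by fastforce
    then show ?thesis using True by (auto simp: le_Suc_eq)
  next
    case False
    then show ?thesis using Suc by (auto simp: le_Suc_eq)
  qed
qed

text \<open>The second factor accounts for \<open>y div 0 = 0\<close>.\<close>

lemma div_eq_count: "(y::nat) div d = (\<Sum>t<y. (if Suc t * d \<le> y then 1 else 0) * (if 1 \<le> d then 1 else 0))"
proof (cases "d = 0")
  case False
  have "(0::nat) * d \<le> y" "\<And>v. Suc v * d \<le> y \<Longrightarrow> v * d \<le> y" by auto
  note count = count_greatest_down_closed[of "\<lambda>v. v * d \<le> y", OF this, where n = y]
  let ?c = "\<Sum>v<y. if Suc v * d \<le> y then 1 else 0 :: nat"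
  have "y div d \<le> ?c" using count by (metis div_le_dividend div_times_less_eq_dividend)
  moreover have "?c \<le> y div d" using count False by (simp add: less_eq_div_iff_mult_less_eq)
  ultimately show ?thesis using False by simp
qed simp

lemma digit_expansion_less:
  fixes b :: nat
  assumes "\<forall>i<m. d i < b"
  shows "(\<Sum>i<m. d i * b ^ i) < b ^ m"
  using assms
proof (induction m)
  case (Suc m)
  then have IH: "(\<Sum>i<m. d i * b ^ i) < b ^ m" and "Suc (d m) \<le> b" by auto
  have "(\<Sum>i<Suc m. d i * b ^ i) < b ^ m + d m * b ^ m" using IH by simp
  also have "\<dots> = Suc (d m) * b ^ m" by simp
  also have "\<dots> \<le> b ^ Suc m" using mult_le_mono1[OF \<open>Suc (d m) \<le> b\<close>] by simp
  finally show ?case .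
qed simp

lemma digit_expansion_digit:
  fixes b :: nat
  assumes "\<forall>i<m. d i < b" "e < m"
  shows "((\<Sum>i<m. d i * b ^ i) div b ^ e) mod b = d e"
  using assms
proof (induction m)
  case (Suc m)
  have b_pos: "b > 0" using Suc.prems by auto
  show ?case
  proof (cases "e = m")
    case True
    have lower: "(\<Sum>i<m. d i * b ^ i) < b ^ m" using digit_expansion_less Suc.prems by auto
    have "(\<Sum>i<Suc m. d i * b ^ i) div b ^ e = ((\<Sum>i<m. d i * b ^ i) + b ^ m * d m) div b ^ m"
      using True by (simp add: mult.commute)
    also have "\<dots> = d m" using lower b_pos by simp
    finally show ?thesis using True Suc.prems by simp
  next
    case False
    then have e_less: "e < m" using Suc.prems by simp
    define c where "c = m - Suc e"
    have c: "m = e + Suc c" using e_less by (simp add: c_def)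
    have power_m: "b ^ m = b ^ e * (b * b ^ c)" by (simp add: c power_add)
    have expand: "(\<Sum>i<Suc m. d i * b ^ i) = (\<Sum>i<m. d i * b ^ i) + b ^ e * (b * (d m * b ^ c))"
      by (simp only: sum.lessThan_Suc power_m) (simp add: ac_simps)
    have "(\<Sum>i<Suc m. d i * b ^ i) div b ^ e = b * (d m * b ^ c) + (\<Sum>i<m. d i * b ^ i) div b ^ e"
      unfolding expand by (rule div_mult_self2) (use b_pos in simp)
    then have "((\<Sum>i<Suc m. d i * b ^ i) div b ^ e) mod b = ((\<Sum>i<m. d i * b ^ i) div b ^ e) mod b"
      by (simp only: mod_mult_self4)
    then show ?thesis using Suc e_less by simp
  qed
qed simp

section \<open>Functions computable relative to an oracle\<close>

definition computable :: "(nat \<Rightarrow> nat) \<Rightarrow> nat \<Rightarrow> (nat list \<Rightarrow> nat) \<Rightarrow> bool" where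
  "computable A k F \<longleftrightarrow> (\<exists>p. \<forall>xs. length xs = k \<longrightarrow> eval A p xs (F xs))"

lemma computable_cong:
  "computable A k F \<Longrightarrow> k = k' \<Longrightarrow> (\<And>xs. length xs = k' \<Longrightarrow> F xs = G xs) \<Longrightarrow> computable A k' G"
  unfolding computable_def by metis

primrec const_prog :: "nat \<Rightarrow> recf" where
  "const_prog 0 = Z"
| "const_prog (Suc n) = Cn S [const_prog n]"

lemma eval_const_prog: "eval A (const_prog n) xs n"
proof (induction n)
  case 0
  show ?case by (simp add: eval_Z)
next
  case (Suc n)
  have "eval A S [n] (Suc n)" using eval_S by blast
  then show ?case using Suc by (auto intro!: eval_Cn[where ys = "[n]"])
qed

lemma computable_const [intro]: "computable A k (\<lambda>xs. c)"
  unfolding computable_def using eval_const_prog by blast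

lemma computable_nth [intro]: "i < k \<Longrightarrow> computable A k (\<lambda>xs. xs ! i)"
  unfolding computable_def using eval_Id by metis

lemma computable_compose:
  assumes "computable A (length Gs) F" "\<forall>G\<in>set Gs. computable A k G"
  shows "computable A k (\<lambda>xs. F (map (\<lambda>G. G xs) Gs))"
proof -
  obtain pf where pf: "\<forall>ys. length ys = length Gs \<longrightarrow> eval A pf ys (F ys)"
    using assms(1) unfolding computable_def by auto
  obtain prog where prog: "\<And>G. G \<in> set Gs \<Longrightarrow> \<forall>xs. length xs = k \<longrightarrow> eval A (prog G) xs (G xs)"
    using assms(2) unfolding computable_def by metis
  show ?thesis unfolding computable_def
  proof (intro exI[of _ "Cn pf (map prog Gs)"] allI impI)
    fix xs :: "nat list" assume "length xs = k"
    then have "list_all2 (\<lambda>g y. eval A g xs y) (map prog Gs) (map (\<lambda>G. G xs) Gs)"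
      using prog by (auto simp: list_all2_conv_all_nth)
    then show "eval A (Cn pf (map prog Gs)) xs (F (map (\<lambda>G. G xs) Gs))"
      using pf by (auto intro: eval_Cn)
  qed
qed

lemma computable_compose1: "computable A 1 F \<Longrightarrow> computable A k G \<Longrightarrow> computable A k (\<lambda>xs. F [G xs])"
  using computable_compose[of A "[G]" F k] by simp

lemma computable_compose2:
  "computable A 2 F \<Longrightarrow> computable A k G\<^sub>1 \<Longrightarrow> computable A k G\<^sub>2 \<Longrightarrow> computable A k (\<lambda>xs. F [G\<^sub>1 xs, G\<^sub>2 xs])"
  using computable_compose[of A "[G\<^sub>1, G\<^sub>2]" F k] by (simp add: numeral_2_eq_2)

lemma computable_Cons_arg:
  assumes "computable A (Suc k) F" "computable A k M"
  shows "computable A k (\<lambda>xs. F (M xs # xs))"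
proof -
  have "computable A k (\<lambda>xs. F (map (\<lambda>G. G xs) (M # map (\<lambda>i xs. xs ! i) [0..<k])))"
    by (rule computable_compose) (use assms in auto)
  then show ?thesis by (rule computable_cong) (simp_all add: comp_def, metis map_nth)
qed

lemma computable_tl:
  assumes "computable A k G"
  shows "computable A (Suc k) (\<lambda>ys. G (tl ys))"
proof -
  have "computable A (Suc k) (\<lambda>ys. G (map (\<lambda>G. G ys) (map (\<lambda>i ys. ys ! Suc i) [0..<k])))"
    by (rule computable_compose) (use assms in auto)
  then show ?thesis
    by (rule computable_cong) (auto simp: comp_def nth_tl intro!: arg_cong[where f = G] nth_equalityI)
qed

lemma computable_hd: "0 < k \<Longrightarrow> computable A k hd"
  by (rule computable_cong[OF computable_nth]) (auto simp: hd_conv_nth)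

lemma computable_nth_tl: "Suc i < k \<Longrightarrow> computable A k (\<lambda>ys. tl ys ! i)"
  by (rule computable_cong[OF computable_nth]) (auto simp: nth_tl)

lemma computable_oracle:
  assumes "computable A k G"
  shows "computable A k (\<lambda>xs. A (G xs))"
proof -
  have "computable A 1 (\<lambda>xs. A (xs ! 0))"
    unfolding computable_def by (intro exI[of _ Orc] allI impI) (auto simp: length_Suc_conv intro: eval_Orc)
  from computable_compose1[OF this assms] show ?thesis by simp
qed

lemma computable_Suc:
  assumes "computable A k G"
  shows "computable A k (\<lambda>xs. Suc (G xs))"
proof -
  have "computable A 1 (\<lambda>xs. Suc (xs ! 0))"
    unfolding computable_def by (intro exI[of _ S] allI impI) (auto simp: length_Suc_conv intro: eval_S)
  from computable_compose1[OF this assms] show ?thesis by simp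
qed

fun prim_rec :: "(nat list \<Rightarrow> nat) \<Rightarrow> (nat list \<Rightarrow> nat) \<Rightarrow> nat \<Rightarrow> nat list \<Rightarrow> nat" where
  "prim_rec F G 0 ys = F ys"
| "prim_rec F G (Suc n) ys = G (n # prim_rec F G n ys # ys)"

lemma computable_prim_rec:
  assumes "computable A k F" "computable A (Suc (Suc k)) G"
  shows "computable A (Suc k) (\<lambda>xs. prim_rec F G (hd xs) (tl xs))"
proof -
  obtain pf where pf: "\<forall>ys. length ys = k \<longrightarrow> eval A pf ys (F ys)"
    using assms(1) unfolding computable_def by auto
  obtain pg where pg: "\<forall>ys. length ys = Suc (Suc k) \<longrightarrow> eval A pg ys (G ys)"
    using assms(2) unfolding computable_def by auto
  have eval_Pr: "eval A (Pr pf pg) (n # ys) (prim_rec F G n ys)" if "length ys = k" for n ys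
  proof (induction n)
    case 0
    show ?case using pf that by (auto intro: eval_Pr0)
  next
    case (Suc n)
    show ?case using pg that by (auto intro!: eval_PrS[OF Suc.IH])
  qed
  show ?thesis unfolding computable_def
    by (intro exI[of _ "Pr pf pg"] allI impI) (auto simp: length_Suc_conv intro: eval_Pr)
qed

lemma computable_add:
  assumes "computable A k G\<^sub>1" "computable A k G\<^sub>2"
  shows "computable A k (\<lambda>xs. G\<^sub>1 xs + G\<^sub>2 xs)"
proof -
  have "prim_rec (\<lambda>ys. ys ! 0) (\<lambda>zs. Suc (zs ! 1)) n ys = n + ys ! 0" for n ys
    by (induction n) auto
  moreover have "computable A (Suc 1) (\<lambda>xs. prim_rec (\<lambda>ys. ys ! 0) (\<lambda>zs. Suc (zs ! 1)) (hd xs) (tl xs))"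
    by (intro computable_prim_rec computable_nth computable_Suc) simp_all
  ultimately have "computable A 2 (\<lambda>xs. xs ! 0 + xs ! 1)"
    by (auto elim!: computable_cong simp: numeral_2_eq_2 length_Suc_conv)
  from computable_compose2[OF this assms] show ?thesis by simp
qed

lemma computable_mult:
  assumes "computable A k G\<^sub>1" "computable A k G\<^sub>2"
  shows "computable A k (\<lambda>xs. G\<^sub>1 xs * G\<^sub>2 xs)"
proof -
  have "prim_rec (\<lambda>ys. 0) (\<lambda>zs. zs ! 1 + zs ! 2) n ys = n * ys ! 0" for n ys
    by (induction n) auto
  moreover have "computable A (Suc 1) (\<lambda>xs. prim_rec (\<lambda>ys. 0) (\<lambda>zs. zs ! 1 + zs ! 2) (hd xs) (tl xs))"
    by (intro computable_prim_rec computable_nth computable_add computable_const) simp_all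
  ultimately have "computable A 2 (\<lambda>xs. xs ! 0 * xs ! 1)"
    by (auto elim!: computable_cong simp: numeral_2_eq_2 length_Suc_conv)
  from computable_compose2[OF this assms] show ?thesis by simp
qed

lemma computable_diff:
  assumes "computable A k G\<^sub>1" "computable A k G\<^sub>2"
  shows "computable A k (\<lambda>xs. G\<^sub>1 xs - G\<^sub>2 xs)"
proof -
  have "prim_rec (\<lambda>ys. 0) (\<lambda>zs. zs ! 0) n ys = n - 1" for n ys
    by (induction n) auto
  moreover have "computable A (Suc 0) (\<lambda>xs. prim_rec (\<lambda>ys. 0) (\<lambda>zs. zs ! 0) (hd xs) (tl xs))"
    by (intro computable_prim_rec computable_nth computable_const) simp_all
  ultimately have pred: "computable A 1 (\<lambda>xs. xs ! 0 - 1)"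
    by (auto elim!: computable_cong simp: length_Suc_conv)
  have "prim_rec (\<lambda>ys. ys ! 0) (\<lambda>zs. zs ! 1 - 1) n ys = ys ! 0 - n" for n ys
    by (induction n) auto
  moreover have "computable A (Suc 1) (\<lambda>xs. prim_rec (\<lambda>ys. ys ! 0) (\<lambda>zs. zs ! 1 - 1) (hd xs) (tl xs))"
    using computable_compose1[OF pred computable_nth, of 1 "Suc (Suc 1)"]
    by (intro computable_prim_rec computable_nth) simp_all
  ultimately have "computable A 2 (\<lambda>xs. xs ! 1 - xs ! 0)"
    by (auto elim!: computable_cong simp: numeral_2_eq_2 length_Suc_conv)
  from computable_compose2[OF this assms(2,1)] show ?thesis by simp
qed

lemma computable_power:
  assumes "computable A k G\<^sub>1" "computable A k G\<^sub>2"
  shows "computable A k (\<lambda>xs. G\<^sub>1 xs ^ G\<^sub>2 xs)"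
proof -
  have "prim_rec (\<lambda>ys. 1) (\<lambda>zs. zs ! 1 * zs ! 2) n ys = ys ! 0 ^ n" for n ys
    by (induction n) auto
  moreover have "computable A (Suc 1) (\<lambda>xs. prim_rec (\<lambda>ys. 1) (\<lambda>zs. zs ! 1 * zs ! 2) (hd xs) (tl xs))"
    by (intro computable_prim_rec computable_nth computable_mult computable_const) simp_all
  ultimately have "computable A 2 (\<lambda>xs. xs ! 1 ^ xs ! 0)"
    by (auto elim!: computable_cong simp: numeral_2_eq_2 length_Suc_conv)
  from computable_compose2[OF this assms(2,1)] show ?thesis by simp
qed

lemma computable_prod_encode:
  assumes "computable A k G\<^sub>1" "computable A k G\<^sub>2"
  shows "computable A k (\<lambda>xs. prod_encode (G\<^sub>1 xs, G\<^sub>2 xs))"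
proof -
  have "prim_rec (\<lambda>ys. 0) (\<lambda>zs. zs ! 1 + Suc (zs ! 0)) n ys = triangle n" for n ys
    by (induction n) auto
  moreover have "computable A (Suc 0) (\<lambda>xs. prim_rec (\<lambda>ys. 0) (\<lambda>zs. zs ! 1 + Suc (zs ! 0)) (hd xs) (tl xs))"
    by (intro computable_prim_rec computable_nth computable_add computable_Suc computable_const) simp_all
  ultimately have "computable A 1 (\<lambda>xs. triangle (xs ! 0))"
    by (auto elim!: computable_cong simp: length_Suc_conv)
  from computable_compose1[OF this computable_add[OF assms]]
  have "computable A k (\<lambda>xs. triangle (G\<^sub>1 xs + G\<^sub>2 xs) + G\<^sub>1 xs)"
    using computable_add assms(1) by simp
  then show ?thesis by (rule computable_cong) (simp_all add: prod_encode_def)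
qed

lemma computable_le_indicator:
  assumes "computable A k G\<^sub>1" "computable A k G\<^sub>2"
  shows "computable A k (\<lambda>xs. if G\<^sub>1 xs \<le> G\<^sub>2 xs then 1 else 0)"
proof -
  have "computable A k (\<lambda>xs. 1 - (G\<^sub>1 xs - G\<^sub>2 xs))"
    using assms by (intro computable_diff computable_const)
  then show ?thesis by (rule computable_cong) auto
qed

lemma computable_less_indicator:
  assumes "computable A k G\<^sub>1" "computable A k G\<^sub>2"
  shows "computable A k (\<lambda>xs. if G\<^sub>1 xs < G\<^sub>2 xs then 1 else 0)"
proof -
  have "computable A k (\<lambda>xs. if Suc (G\<^sub>1 xs) \<le> G\<^sub>2 xs then 1 else 0)"
    using assms by (intro computable_le_indicator computable_Suc)
  then show ?thesis by (rule computable_cong) auto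
qed

lemma computable_sum:
  assumes "computable A (Suc k) (\<lambda>ys. F (hd ys) (tl ys))" "computable A k M"
  shows "computable A k (\<lambda>xs. \<Sum>i<M xs. F i xs)"
proof -
  let ?Gs = "(\<lambda>zs. zs ! 0) # map (\<lambda>i zs. zs ! Suc (Suc i)) [0..<k]"
  have "computable A (Suc (Suc k)) (\<lambda>zs. (\<lambda>ys. F (hd ys) (tl ys)) (map (\<lambda>G. G zs) ?Gs))"
    by (rule computable_compose) (use assms in auto)
  then have "computable A (Suc (Suc k)) (\<lambda>zs. F (zs ! 0) (drop 2 zs))"
    by (rule computable_cong) (auto simp: comp_def intro!: arg_cong[where f = "F _"] nth_equalityI)
  then have "computable A (Suc k) (\<lambda>xs. prim_rec (\<lambda>_. 0) (\<lambda>zs. zs ! 1 + F (zs ! 0) (drop 2 zs)) (hd xs) (tl xs))"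
    by (intro computable_prim_rec computable_add computable_nth computable_const) simp_all
  from computable_Cons_arg[OF this assms(2)]
  have "computable A k (\<lambda>xs. prim_rec (\<lambda>_. 0) (\<lambda>zs. zs ! 1 + F (zs ! 0) (drop 2 zs)) (M xs) xs)"
    by simp
  moreover have "prim_rec (\<lambda>_. 0) (\<lambda>zs. zs ! 1 + F (zs ! 0) (drop 2 zs)) n xs = (\<Sum>i<n. F i xs)" for n xs
    by (induction n) auto
  ultimately show ?thesis by simp
qed

lemma computable_div:
  assumes "computable A k G\<^sub>1" "computable A k G\<^sub>2"
  shows "computable A k (\<lambda>xs. G\<^sub>1 xs div G\<^sub>2 xs)"
proof -
  have "computable A k (\<lambda>xs. \<Sum>t<G\<^sub>1 xs. (if Suc t * G\<^sub>2 xs \<le> G\<^sub>1 xs then 1 else 0) * (if 1 \<le> G\<^sub>2 xs then 1 else 0))"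
    using assms
    by (intro computable_sum computable_mult computable_le_indicator computable_Suc computable_hd
        computable_const computable_tl; simp)
  then show ?thesis by (rule computable_cong) (simp_all add: div_eq_count)
qed

lemma computable_mod:
  assumes "computable A k G\<^sub>1" "computable A k G\<^sub>2"
  shows "computable A k (\<lambda>xs. G\<^sub>1 xs mod G\<^sub>2 xs)"
proof -
  have "computable A k (\<lambda>xs. G\<^sub>1 xs - G\<^sub>1 xs div G\<^sub>2 xs * G\<^sub>2 xs)"
    using assms by (intro computable_diff computable_mult computable_div)
  then show ?thesis by (rule computable_cong) (simp_all add: minus_div_mult_eq_mod)
qed

section \<open>Recursive functions and Goedel numbers\<close>

primrec zero_oracle_inlined :: "recf \<Rightarrow> recf" where
  "zero_oracle_inlined Z = Z"
| "zero_oracle_inlined S = S"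
| "zero_oracle_inlined (Id n) = Id n"
| "zero_oracle_inlined (Cn f gs) = Cn (zero_oracle_inlined f) (map zero_oracle_inlined gs)"
| "zero_oracle_inlined (Pr f g) = Pr (zero_oracle_inlined f) (zero_oracle_inlined g)"
| "zero_oracle_inlined (Mn f) = Mn (zero_oracle_inlined f)"
| "zero_oracle_inlined Orc = Cn Z []"

lemma eval_zero_oracle_inlined: "eval (\<lambda>_. 0) p xs y \<Longrightarrow> eval A (zero_oracle_inlined p) xs y"
proof (induction rule: eval.induct)
  case (eval_Cn xs gs ys f z)
  then show ?case by (auto intro!: eval.eval_Cn simp: list_all2_map1 elim: list_all2_mono)
next
  case (eval_Orc x xs)
  then show ?case using eval.eval_Cn[of A "x # xs" "[]" "[]" Z 0] eval.eval_Z by simp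
qed (auto intro: eval.intros)

lemma computable_relativize: "computable (\<lambda>_. 0) k F \<Longrightarrow> computable A k F"
  unfolding computable_def using eval_zero_oracle_inlined by blast

lemma enc_inject: "enc p = enc q \<Longrightarrow> p = q"
proof (induction p arbitrary: q)
  case (Cn f gs)
  then show ?case
  proof (cases q)
    case (Cn f' gs')
    with Cn.prems have "enc f = enc f'" "list_encode (map enc gs) = list_encode (map enc gs')"
      by auto
    then have "f = f'" "map enc gs = map enc gs'"
      using Cn.IH(1) by (auto dest: arg_cong[where f = list_decode])
    moreover from this(2) have "gs = gs'"
      by (rule list.inj_map_strong[rotated]) (rule Cn.IH(2))
    ultimately show ?thesis using Cn by simp
  qed auto
qed (case_tac q; auto)+

lemma computable_recursive_fn:
  assumes "recursive_fn h" "computable A k G"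
  shows "computable A k (\<lambda>xs. h (G xs))"
proof -
  obtain e where e: "\<forall>x. phi e x (h x)" using assms(1) unfolding recursive_fn_def by auto
  then obtain p where p: "enc p = e" unfolding phi_def by blast
  have "eval (\<lambda>_. 0) p [x] (h x)" for x
    using e[rule_format, of x] p enc_inject unfolding phi_def by blast
  then have "computable (\<lambda>_. 0) 1 (\<lambda>xs. h (xs ! 0))"
    unfolding computable_def by (intro exI[of _ p]) (auto simp: length_Suc_conv)
  from computable_compose1[OF computable_relativize[OF this] assms(2)] show ?thesis by simp
qed

primrec const_prog_code :: "nat \<Rightarrow> nat" where
  "const_prog_code 0 = enc Z"
| "const_prog_code (Suc n) = prod_encode (3, prod_encode (enc S, list_encode [const_prog_code n]))"

lemma enc_const_prog: "enc (const_prog n) = const_prog_code n"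
  by (induction n) auto

lemma computable_const_prog_code:
  assumes "computable A k G"
  shows "computable A k (\<lambda>xs. const_prog_code (G xs))"
proof -
  let ?step = "\<lambda>zs. prod_encode (3, prod_encode (enc S, Suc (prod_encode (zs ! 1, 0))))"
  have "prim_rec (\<lambda>ys. enc Z) ?step n ys = const_prog_code n" for n ys
    by (induction n) auto
  moreover have "computable A (Suc 0) (\<lambda>xs. prim_rec (\<lambda>ys. enc Z) ?step (hd xs) (tl xs))"
    by (intro computable_prim_rec computable_prod_encode computable_Suc computable_nth computable_const)
      simp_all
  ultimately have "computable A 1 (\<lambda>xs. const_prog_code (xs ! 0))"
    by (auto elim!: computable_cong simp: length_Suc_conv)
  from computable_compose1[OF this assms] show ?thesis by simp
qed

text \<open>\<open>digit_count h n\<close> counts the \<open>v < n\<close> with \<open>(v + 3)^(v + 1) \<le> h n\<close>; it is the largest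
  \<open>v \<le> n\<close> with \<open>(v + 2)^v \<le> h n\<close> (\<open>digit_count_greatest\<close>), written as a sum so that it is
  evidently computable from \<open>h\<close>.\<close>

definition digit_count :: "(nat \<Rightarrow> nat) \<Rightarrow> nat \<Rightarrow> nat" where
  "digit_count h n = (\<Sum>v<n. if (Suc v + 2) ^ Suc v \<le> h n then 1 else 0)"

definition digit_base :: "(nat \<Rightarrow> nat) \<Rightarrow> nat \<Rightarrow> nat" where
  "digit_base h n = digit_count h n + 2"

definition base_digit :: "(nat \<Rightarrow> nat) \<Rightarrow> nat \<Rightarrow> nat \<Rightarrow> nat \<Rightarrow> nat" where
  "base_digit h y e n = (y div digit_base h n ^ e) mod digit_base h n"

lemma computable_digit_count:
  assumes "recursive_fn h" "computable A k G"
  shows "computable A k (\<lambda>xs. digit_count h (G xs))"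
proof -
  have "computable A 1 (\<lambda>xs. \<Sum>v<xs ! 0. if (Suc v + 2) ^ Suc v \<le> h (xs ! 0) then 1 else 0)"
    by (intro computable_sum computable_le_indicator computable_power computable_add computable_Suc
        computable_hd computable_const computable_recursive_fn[OF assms(1)] computable_nth_tl
        computable_nth; simp)
  from computable_compose1[OF this[folded digit_count_def] assms(2)] show ?thesis by simp
qed

lemma computable_digit_base:
  "recursive_fn h \<Longrightarrow> computable A k G \<Longrightarrow> computable A k (\<lambda>xs. digit_base h (G xs))"
  unfolding digit_base_def by (intro computable_add computable_digit_count computable_const)

definition digit_prog :: "(nat \<Rightarrow> nat) \<Rightarrow> recf" where
  "digit_prog h = (SOME p. \<forall>xs. length xs = 3 \<longrightarrow>
     eval (\<lambda>_. 0) p xs (base_digit h (xs ! 0) (xs ! 1) (xs ! 2)))"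

lemma eval_digit_prog:
  assumes "recursive_fn h"
  shows "eval (\<lambda>_. 0) (digit_prog h) [y, e, n] (base_digit h y e n)"
proof -
  have "computable (\<lambda>_. 0) 3 (\<lambda>xs. base_digit h (xs ! 0) (xs ! 1) (xs ! 2))"
    unfolding base_digit_def
    by (intro computable_mod computable_div computable_power computable_digit_base[OF assms]
        computable_nth; simp)
  then have "\<forall>xs. length xs = 3 \<longrightarrow> eval (\<lambda>_. 0) (digit_prog h) xs (base_digit h (xs ! 0) (xs ! 1) (xs ! 2))"
    unfolding computable_def digit_prog_def by (rule someI_ex)
  from spec[OF this, of "[y, e, n]"] show ?thesis by (simp add: numeral_2_eq_2 numeral_3_eq_3)
qed

text \<open>For \<open>e = enc P\<close>, \<open>diag_index h e n\<close> is the code of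
  \<open>Cn (digit_prog h) [Cn P [const_prog n], const_prog e, const_prog n]\<close>, a program that on
  every input outputs the \<open>e\<close>-th base-\<open>digit_base h n\<close> digit of \<open>\<phi>\<^sub>e(n)\<close>.\<close>

definition diag_index :: "(nat \<Rightarrow> nat) \<Rightarrow> nat \<Rightarrow> nat \<Rightarrow> nat" where
  "diag_index h e n = prod_encode (3, prod_encode (enc (digit_prog h),
      list_encode [prod_encode (3, prod_encode (e, list_encode [const_prog_code n])),
                   const_prog_code e, const_prog_code n]))"

lemma computable_diag_index:
  "computable A k G\<^sub>1 \<Longrightarrow> computable A k G\<^sub>2 \<Longrightarrow> computable A k (\<lambda>xs. diag_index h (G\<^sub>1 xs) (G\<^sub>2 xs))"
  unfolding diag_index_def list_encode.simps
  by (intro computable_prod_encode computable_Suc computable_const_prog_code computable_const)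

lemma phi_diag_index:
  assumes "recursive_fn h" "phi e n y"
  shows "phi (diag_index h e n) (diag_index h e n) (base_digit h y e n)"
proof -
  obtain P where P: "enc P = e" "eval (\<lambda>_. 0) P [n] y" using assms(2) unfolding phi_def by auto
  let ?Q = "Cn (digit_prog h) [Cn P [const_prog n], const_prog e, const_prog n]"
  have "enc ?Q = diag_index h e n" by (simp add: diag_index_def enc_const_prog P(1))
  moreover have "eval (\<lambda>_. 0) ?Q [x] (base_digit h y e n)" for x
  proof (rule eval_Cn[where ys = "[y, e, n]"])
    have "eval (\<lambda>_. 0) (Cn P [const_prog n]) [x] y"
      by (rule eval_Cn[where ys = "[n]"]) (auto intro: eval_const_prog P(2))
    then show "list_all2 (\<lambda>g y. eval (\<lambda>_. 0) g [x] y) [Cn P [const_prog n], const_prog e, const_prog n] [y, e, n]"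
      by (auto intro: eval_const_prog)
    show "eval (\<lambda>_. 0) (digit_prog h) [y, e, n] (base_digit h y e n)" by (rule eval_digit_prog[OF assms(1)])
  qed
  ultimately show ?thesis unfolding phi_def by blast
qed

definition diag_index_bound :: "(nat \<Rightarrow> nat) \<Rightarrow> nat \<Rightarrow> nat" where
  "diag_index_bound h n = (\<Sum>m<Suc n. \<Sum>i<Suc m. diag_index h i m)"

text \<open>Since \<open>diag_index_bound h\<close> is monotone, the \<open>n\<close> counted by \<open>stage h m\<close> form an
  initial segment; hence \<open>stage h m \<le> n\<close> as soon as \<open>m \<le> diag_index_bound h n\<close>.\<close>

definition stage :: "(nat \<Rightarrow> nat) \<Rightarrow> nat \<Rightarrow> nat" where
  "stage h m = (\<Sum>n<m. if diag_index_bound h n < m then 1 else 0)"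

definition dnr_bound :: "(nat \<Rightarrow> nat) \<Rightarrow> nat \<Rightarrow> nat" where
  "dnr_bound h m = digit_base h (stage h m)"

definition snpr_witness :: "(nat \<Rightarrow> nat) \<Rightarrow> (nat \<Rightarrow> nat) \<Rightarrow> nat \<Rightarrow> nat" where
  "snpr_witness h f n = (\<Sum>i<digit_count h n. f (diag_index h i n) * digit_base h n ^ i)"

lemma diag_index_le_bound: "i \<le> n \<Longrightarrow> diag_index h i n \<le> diag_index_bound h n"
  unfolding diag_index_bound_def
  by (rule order_trans[OF member_le_sum member_le_sum[where f = "\<lambda>m. \<Sum>i<Suc m. diag_index h i m"]])
    auto

lemma diag_index_bound_mono: "n \<le> n' \<Longrightarrow> diag_index_bound h n \<le> diag_index_bound h n'"
  by (rule lift_Suc_mono_le[of "diag_index_bound h"]) (simp_all add: diag_index_bound_def)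

lemma stage_le: "m \<le> diag_index_bound h n \<Longrightarrow> stage h m \<le> n"
proof -
  assume m: "m \<le> diag_index_bound h n"
  have "stage h m \<le> (\<Sum>k<m. if k < n then 1 else 0)" unfolding stage_def
  proof (rule sum_mono)
    fix k
    show "(if diag_index_bound h k < m then 1 else 0) \<le> (if k < n then 1 else 0 :: nat)"
      using m diag_index_bound_mono[of n k h] by (cases "n \<le> k") auto
  qed
  also have "(\<Sum>k<m. if k < n then 1 else 0 :: nat) = min m n" by (induction m) auto
  finally show ?thesis by simp
qed

lemma stage_mono: "m \<le> m' \<Longrightarrow> stage h m \<le> stage h m'"
proof -
  assume m: "m \<le> m'"
  have "stage h m \<le> (\<Sum>k<m. if diag_index_bound h k < m' then 1 else 0)" unfolding stage_def
    by (rule sum_mono) (use m in auto)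
  also have "\<dots> \<le> stage h m'" unfolding stage_def by (rule sum_mono2) (use m in auto)
  finally show ?thesis .
qed

lemma stage_unbounded: "\<exists>m. N \<le> stage h m"
proof -
  let ?m = "Suc (N + (\<Sum>n<N. diag_index_bound h n))"
  have "\<forall>k<N. diag_index_bound h k < ?m"
    using member_le_sum[of _ "{..<N}" "diag_index_bound h"] by (auto simp: less_Suc_eq_le trans_le_add2)
  then have "N = (\<Sum>k<N. if diag_index_bound h k < ?m then 1 else 0 :: nat)" by simp
  also have "\<dots> \<le> stage h ?m" unfolding stage_def by (rule sum_mono2) auto
  finally show ?thesis by blast
qed

lemma computable_dnr_bound:
  assumes "recursive_fn h"
  shows "computable A 1 (\<lambda>xs. dnr_bound h (xs ! 0))"
  unfolding dnr_bound_def stage_def diag_index_bound_def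
  by (intro computable_digit_base[OF assms] computable_sum computable_less_indicator
      computable_diag_index computable_Suc computable_hd computable_nth_tl computable_nth computable_tl;
      simp)

lemma computable_snpr_witness:
  assumes "recursive_fn h"
  shows "computable f 1 (\<lambda>xs. snpr_witness h f (xs ! 0))"
  unfolding snpr_witness_def
  by (intro computable_sum computable_mult computable_power computable_oracle computable_diag_index
      computable_digit_base[OF assms] computable_digit_count[OF assms] computable_hd
      computable_nth_tl computable_nth; simp)

context
  fixes h :: "nat \<Rightarrow> nat"
  assumes order: "order_fn h"
begin

lemma digit_count_greatest:
  "(digit_count h n + 2) ^ digit_count h n \<le> h n \<and> digit_count h n \<le> n \<and>
   (\<forall>v\<le>n. (v + 2) ^ v \<le> h n \<longrightarrow> v \<le> digit_count h n)"
proof -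
  have "1 \<le> h n" using order monoD[of h 0 n] unfolding order_fn_def by fastforce
  then have "(0 + 2) ^ 0 \<le> h n" by simp
  moreover have "(v + 2) ^ v \<le> h n" if "(Suc v + 2) ^ Suc v \<le> h n" for v
  proof -
    have "(v + 2) ^ v \<le> (Suc v + 2) ^ v" by (rule power_mono) auto
    also have "\<dots> \<le> (Suc v + 2) ^ Suc v" by (rule power_increasing) auto
    finally show ?thesis using that by simp
  qed
  ultimately show ?thesis
    using count_greatest_down_closed[of "\<lambda>v. (v + 2) ^ v \<le> h n" n] unfolding digit_count_def by simp
qed

lemma digit_count_mono: "n \<le> n' \<Longrightarrow> digit_count h n \<le> digit_count h n'"
proof -
  assume "n \<le> n'"
  moreover have "mono h" using order unfolding order_fn_def by simp
  ultimately have "(digit_count h n + 2) ^ digit_count h n \<le> h n'" "digit_count h n \<le> n'"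
    using digit_count_greatest[of n] by (auto dest: monoD)
  then show ?thesis using digit_count_greatest[of n'] by blast
qed

lemma digit_count_unbounded: "\<exists>N. c \<le> digit_count h N"
proof -
  obtain n where n: "(c + 2) ^ c < h n" using order unfolding order_fn_def by blast
  have "h n \<le> h (max n c)" using order unfolding order_fn_def by (simp add: monoD)
  then show ?thesis using n digit_count_greatest[of "max n c"] by (intro exI[of _ "max n c"]) auto
qed

lemma order_fn_dnr_bound: "order_fn (dnr_bound h)"
  unfolding order_fn_def
proof (intro conjI)
  have recursive: "recursive_fn h" using order unfolding order_fn_def by simp
  obtain p where "\<forall>xs. length xs = 1 \<longrightarrow> eval (\<lambda>_. 0) p xs (dnr_bound h (xs ! 0))"
    using computable_dnr_bound[OF recursive] unfolding computable_def by blast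
  then have "eval (\<lambda>_. 0) p [x] (dnr_bound h x)" for x by (auto dest: spec[of _ "[x]"])
  then show "recursive_fn (dnr_bound h)" unfolding recursive_fn_def phi_def by blast
  show "mono (dnr_bound h)"
    unfolding dnr_bound_def digit_base_def by (intro monoI add_right_mono digit_count_mono stage_mono)
  show "\<forall>m. \<exists>x. m < dnr_bound h x"
  proof
    fix m
    obtain N where N: "m \<le> digit_count h N" using digit_count_unbounded by blast
    obtain x where "N \<le> stage h x" using stage_unbounded by blast
    then have "m \<le> digit_count h (stage h x)" using N digit_count_mono by (meson le_trans)
    then show "\<exists>x. m < dnr_bound h x" unfolding dnr_bound_def digit_base_def by (intro exI[of _ x]) simp
  qed
  show "2 \<le> dnr_bound h 0" unfolding dnr_bound_def digit_base_def by simp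
qed

context
  fixes f :: "nat \<Rightarrow> nat"
  assumes bounded: "bounded_by f (dnr_bound h)"
begin

lemma diag_index_value_less_base: "i < digit_count h n \<Longrightarrow> f (diag_index h i n) < digit_base h n"
proof -
  assume "i < digit_count h n"
  then have "i \<le> n" using digit_count_greatest[of n] by simp
  then have "stage h (diag_index h i n) \<le> n" by (intro stage_le diag_index_le_bound)
  then have "dnr_bound h (diag_index h i n) \<le> digit_base h n"
    unfolding dnr_bound_def digit_base_def by (simp add: digit_count_mono)
  then show ?thesis using bounded unfolding bounded_by_def by (meson less_le_trans)
qed

lemma snpr_witness_less: "snpr_witness h f n < h n"
proof -
  have "snpr_witness h f n < digit_base h n ^ digit_count h n"
    unfolding snpr_witness_def by (rule digit_expansion_less) (use diag_index_value_less_base in auto)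
  also have "\<dots> \<le> h n" using digit_count_greatest[of n] unfolding digit_base_def by simp
  finally show ?thesis .
qed

lemma base_digit_snpr_witness:
  "e < digit_count h n \<Longrightarrow> base_digit h (snpr_witness h f n) e n = f (diag_index h e n)"
  unfolding base_digit_def snpr_witness_def
  by (rule digit_expansion_digit) (use diag_index_value_less_base in auto)

lemma SNPR_snpr_witness:
  assumes "DNR f"
  shows "SNPR (snpr_witness h f)"
  unfolding SNPR_def
proof
  fix e
  obtain N where N: "Suc e \<le> digit_count h N" using digit_count_unbounded by blast
  have "n < N" if "phi e n (snpr_witness h f n)" for n
  proof (rule ccontr)
    assume "\<not> n < N"
    then have "e < digit_count h n" using N digit_count_mono[of N n] by simp
    have recursive: "recursive_fn h" using order unfolding order_fn_def by simp
    have "phi (diag_index h e n) (diag_index h e n) (f (diag_index h e n))"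
      using phi_diag_index[OF recursive that] base_digit_snpr_witness[OF \<open>e < digit_count h n\<close>]
      by simp
    then show False using \<open>DNR f\<close> unfolding DNR_def by blast
  qed
  then have "{n. phi e n (snpr_witness h f n)} \<subseteq> {..<N}" by blast
  then show "finite {n. phi e n (snpr_witness h f n)}" using finite_subset by blast
qed

end

lemma turing_le_snpr_witness: "turing_le (snpr_witness h f) f"
proof -
  have "recursive_fn h" using order unfolding order_fn_def by simp
  from computable_snpr_witness[OF this, of f] obtain p
    where "\<forall>xs. length xs = 1 \<longrightarrow> eval f p xs (snpr_witness h f (xs ! 0))"
    unfolding computable_def by blast
  then have "eval f p [x] (snpr_witness h f x)" for x by (auto dest: spec[of _ "[x]"])
  then show ?thesis unfolding turing_le_def by blast
qed

end

theorem theorem1: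
  assumes "order_fn h"
  shows "\<exists>g. order_fn g \<and>
           (\<forall>f. DNR f \<and> bounded_by f g \<longrightarrow>
              (\<exists>j. turing_le j f \<and> SNPR j \<and> bounded_by j h))"
proof (rule exI[of _ "dnr_bound h"], intro conjI allI impI)
  show "order_fn (dnr_bound h)" using order_fn_dnr_bound[OF assms] .
  fix f
  assume f: "DNR f \<and> bounded_by f (dnr_bound h)"
  have "SNPR (snpr_witness h f)" using SNPR_snpr_witness[OF assms] f by blast
  moreover have "bounded_by (snpr_witness h f) h"
    using snpr_witness_less[OF assms] f unfolding bounded_by_def by blast
  ultimately show "\<exists>j. turing_le j f \<and> SNPR j \<and> bounded_by j h"
    using turing_le_snpr_witness[OF assms] by blast
qed

end
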